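(* Let $R\subseteq\mathbb N$ be sparse, $d\in\mathbb N^+$, $\tilde R\subseteq^d R$, $n\in\mathbb N^+$, and $\mathbf A$ an $n$-tuple of operators on $R$, all $\neq_R0$. Then there is $\Delta_0$ such that for every $\Delta\in d\mathbb N$ with $\Delta\ge\Delta_0$: (i) for all $x\in\mathbb Z$, $x>\mathbf A\cdot P_\Delta(x;\mathbf A,\tilde R)$ iff $x>\inf\mathbf A\cdot\tilde R^n_\Delta$, and $x\le\mathbf A\cdot Q_\Delta(x;\mathbf A,\tilde R)$ iff $x\le\sup\mathbf A\cdot\tilde R^n_\Delta$; (ii) for all $x\in\mathbb Z$, $Q^1_\Delta(x;\mathbf A,\tilde R)=\sigma^{d\varepsilon}P^1_\Delta(x;\mathbf A,\tilde R)$ for some $\varepsilon\in\{-1,0,1\}$.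
   Context: Let $R\subseteq\mathbb N$ be infinite, enumerated increasingly as $(r_n)_{n\in\mathbb N}$; $\sigma:R\to R$ is the successor map $\sigma(r_n)=r_{n+1}$, $\sigma^k$ its $k$-fold iterate ($\sigma^0=\mathrm{id}$), $\sigma^{-1}$ the predecessor map with $\sigma^{-1}(\min R)=\min R$ and $\sigma^{-k}$ its iterate. An operator on $R$ is a function $R\to\mathbb Z$, $z\mapsto a_m\sigma^m(z)+\dots+a_0\sigma^0(z)$ with $a_i\in\mathbb Z$. For an operator $A$: $A=_R0$ if $Az=0$ for all $z\in R$; $A>_R0$ (resp. $A<_R0$) if $Az>0$ (resp. $Az<0$) for all but finitely many $z\in R$. $R$ is sparse if every operator $A$ satisfies (S1) $A=_R0$ or $A>_R0$ or $A<_R0$; and (S2) if $A>_R0$ then there is $\Delta\in\mathbb N$ with $A(\sigma^\Delta z)>z$ for all $z\in R$. $\tilde R\subseteq^dR$ means $\tilde R=\{r_{N+dt}:t\in\mathbb N\}$ for some $N\in\mathbb N$. For $\mathbf A$ an $n$-tuple of operators and $z\in R^n$, $\mathbf A\cdot z=\sum_iA_iz_i$; for $S\subseteq R^n$, $\mathbf A\cdot S=\{\mathbf A\cdot z:z\in S\}$. $\tilde R^n_\Delta=\{(z_1,\dots,z_n)\in\tilde R^n: z_i\ge\sigma^\Delta z_{i+1}\ (1\le i\le n)\}$ with $z_{n+1}:=\min\tilde R$. When $\Delta$ is large enough that $z\mapsto\mathbf A\cdot z$ is injective on $R^n_\Delta$: for nonempty $S\subseteq R^n_\Delta$ with $\mathbf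 A\cdot S$ bounded below (resp. above), $\min_{\mathbf A}S$ (resp. $\max_{\mathbf A}S$) is the unique $z\in S$ with $\mathbf A\cdot z=\min\mathbf A\cdot S$ (resp. $\max$). Then $P_\Delta(x;\mathbf A,\tilde R)=\max_{\mathbf A}\{z\in\tilde R^n_\Delta:\mathbf A\cdot z<x\}$ if $x>\inf\mathbf A\cdot\tilde R^n_\Delta$, and $=\min_{\mathbf A}\tilde R^n_\Delta$ otherwise; $Q_\Delta(x;\mathbf A,\tilde R)=\min_{\mathbf A}\{z\in\tilde R^n_\Delta:\mathbf A\cdot z\ge x\}$ if $x\le\sup\mathbf A\cdot\tilde R^n_\Delta$, and $=\max_{\mathbf A}\tilde R^n_\Delta$ otherwise. $P^i_\Delta,Q^i_\Delta$ denote the $i$-th coordinates. *)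

theory Defs
  imports Main "HOL-Library.Infinite_Set" "HOL-Library.Extended_Real"
begin

(* R :: nat set, enumerated increasingly by  enumerate R  (r_n = enumerate R n). *)

definition idx :: "nat set \<Rightarrow> nat \<Rightarrow> nat" where
  "idx R z = (LEAST n. enumerate R n = z)"

definition sig :: "nat set \<Rightarrow> nat \<Rightarrow> nat" where
  "sig R z = enumerate R (Suc (idx R z))"

(* predecessor map sigma^{-1}, with sigma^{-1}(min R) = min R *)
definition sigpred :: "nat set \<Rightarrow> nat \<Rightarrow> nat" where
  "sigpred R z = (if idx R z = 0 then z else enumerate R (idx R z - 1))"

definition sigpow :: "nat set \<Rightarrow> nat \<Rightarrow> nat \<Rightarrow> nat" where
  "sigpow R k = (sig R ^^ k)"

definition sigpowi :: "nat set \<Rightarrow> int \<Rightarrow> nat \<Rightarrow> nat" where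
  "sigpowi R k = (if 0 \<le> k then sig R ^^ nat k else sigpred R ^^ nat (- k))"

(* an operator a_m sigma^m + ... + a_0 sigma^0 is the coefficient list [a_0,...,a_m] *)
definition op_app :: "nat set \<Rightarrow> int list \<Rightarrow> nat \<Rightarrow> int" where
  "op_app R A z = (\<Sum>i<length A. A ! i * int (sigpow R i z))"

definition op_zero :: "nat set \<Rightarrow> int list \<Rightarrow> bool" where
  "op_zero R A \<longleftrightarrow> (\<forall>z\<in>R. op_app R A z = 0)"

definition op_pos :: "nat set \<Rightarrow> int list \<Rightarrow> bool" where
  "op_pos R A \<longleftrightarrow> finite {z\<in>R. \<not> op_app R A z > 0}"

definition op_neg :: "nat set \<Rightarrow> int list \<Rightarrow> bool" where
  "op_neg R A \<longleftrightarrow> finite {z\<in>R. \<not> op_app R A z < 0}"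

definition sparse :: "nat set \<Rightarrow> bool" where
  "sparse R \<longleftrightarrow> infinite R \<and>
     (\<forall>A. (op_zero R A \<or> op_pos R A \<or> op_neg R A) \<and>
          (op_pos R A \<longrightarrow> (\<exists>\<Delta>. \<forall>z\<in>R. op_app R A (sigpow R \<Delta> z) > int z)))"

definition subd :: "nat \<Rightarrow> nat set \<Rightarrow> nat set \<Rightarrow> bool" where
  "subd d R Rt \<longleftrightarrow> (\<exists>N. Rt = {enumerate R (N + d * t) | t. True})"

(* n-tuples are lists of length n (coordinate i is  z ! (i-1)) *)
definition dotA :: "nat set \<Rightarrow> int list list \<Rightarrow> nat list \<Rightarrow> int" where
  "dotA R As z = (\<Sum>i<length As. op_app R (As ! i) (z ! i))"

(* Rt^n_Delta; sigma is the successor map of R; z_{n+1} := min Rt *)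
definition tupDelta :: "nat set \<Rightarrow> nat set \<Rightarrow> nat \<Rightarrow> nat \<Rightarrow> nat list set" where
  "tupDelta R Rt n \<Delta> = {z. length z = n \<and> set z \<subseteq> Rt \<and>
      (\<forall>i<n. z ! i \<ge> sigpow R \<Delta> (if Suc i < n then z ! Suc i else Inf Rt))}"

definition minA :: "nat set \<Rightarrow> int list list \<Rightarrow> nat list set \<Rightarrow> nat list" where
  "minA R As S = (THE z. z \<in> S \<and> (\<forall>w\<in>S. dotA R As z \<le> dotA R As w))"

definition maxA :: "nat set \<Rightarrow> int list list \<Rightarrow> nat list set \<Rightarrow> nat list" where
  "maxA R As S = (THE z. z \<in> S \<and> (\<forall>w\<in>S. dotA R As w \<le> dotA R As z))"

definition infA :: "nat set \<Rightarrow> int list list \<Rightarrow> nat list set \<Rightarrow> ereal" where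
  "infA R As S = (INF z\<in>S. ereal (of_int (dotA R As z)))"

definition supA :: "nat set \<Rightarrow> int list list \<Rightarrow> nat list set \<Rightarrow> ereal" where
  "supA R As S = (SUP z\<in>S. ereal (of_int (dotA R As z)))"

definition Pfun :: "nat set \<Rightarrow> nat set \<Rightarrow> nat \<Rightarrow> int list list \<Rightarrow> int \<Rightarrow> nat list" where
  "Pfun R Rt \<Delta> As x =
     (let S = tupDelta R Rt (length As) \<Delta> in
      if ereal (of_int x) > infA R As S
      then maxA R As {z\<in>S. dotA R As z < x}
      else minA R As S)"

definition Qfun :: "nat set \<Rightarrow> nat set \<Rightarrow> nat \<Rightarrow> int list list \<Rightarrow> int \<Rightarrow> nat list" where
  "Qfun R Rt \<Delta> As x =
     (let S = tupDelta R Rt (length As) \<Delta> in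
      if ereal (of_int x) \<le> supA R As S
      then minA R As {z\<in>S. dotA R As z \<ge> x}
      else maxA R As S)"

end

theory Submission
  imports Defs
begin

text \<open>By (S1) a nonzero operator \<open>A\<close> is eventually of one sign \<open>s\<close>, and (S1), (S2) applied to
  \<open>s (A \<sigma> - A)\<close> show that \<open>A\<close> is eventually strictly monotone with increments
  \<open>s (A r\<^sub>b - A r\<^sub>a) > r\<^bsub>b-1-D\<^esub>\<close>; (S2) applied to \<open>\<sigma> - 1\<close> shows that \<open>R\<close> grows
  geometrically. When consecutive coordinates of a tuple are \<open>\<Delta>\<close> indices apart with \<open>\<Delta>\<close> large,
  the change in the first coordinate where two tuples differ therefore outweighs anything the later
  coordinates can contribute. Hence \<open>z \<mapsto> A\<cdot>z\<close> is injective on \<open>R\<^sup>n\<^sub>\<Delta>\<close>, so that \<open>P\<close> and \<open>Q\<close> are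
  well defined and (i) follows. For (ii): if the first coordinates of \<open>P\<close> and \<open>Q\<close> were two or more
  \<open>d\<close>-steps apart, the lowest tuple whose first coordinate lies strictly between them would have a
  value strictly between \<open>A\<cdot>P\<close> and \<open>A\<cdot>Q\<close>, contradicting the extremal choice of \<open>P\<close> and \<open>Q\<close>.\<close>

context
  fixes R :: "nat set"
  assumes R_infinite: "infinite R"
begin

lemma idx_enumerate [simp]: "idx R (enumerate R k) = k"
  unfolding idx_def
  by (rule Least_equality) (auto dest: inj_enumerate[OF R_infinite, THEN injD])

lemma sig_enumerate [simp]: "sig R (enumerate R k) = enumerate R (Suc k)"
  by (simp add: sig_def)

lemma sigpow_enumerate [simp]: "sigpow R j (enumerate R k) = enumerate R (k + j)"
  unfolding sigpow_def by (induction j) auto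

lemma sigpred_enumerate [simp]: "sigpred R (enumerate R k) = enumerate R (k - 1)"
  by (simp add: sigpred_def)

lemma sigpred_funpow_enumerate [simp]: "(sigpred R ^^ j) (enumerate R k) = enumerate R (k - j)"
  by (induction j) (auto simp: diff_Suc)

lemma sigpowi_of_nat_enumerate: "sigpowi R (int j) (enumerate R k) = enumerate R (k + j)"
  using sigpow_enumerate by (simp add: sigpowi_def sigpow_def)

lemma sigpowi_uminus_enumerate: "sigpowi R (- int j) (enumerate R k) = enumerate R (k - j)"
  by (cases "j = 0") (simp_all add: sigpowi_def)

lemma op_app_enumerate:
  "op_app R A (enumerate R k) = (\<Sum>i<length A. A ! i * int (enumerate R (k + i)))"
  by (simp add: op_app_def)

lemma abs_op_app_enumerate_le:
  "\<bar>op_app R A (enumerate R k)\<bar> \<le> (\<Sum>i<length A. \<bar>A ! i\<bar>) * int (enumerate R (k + length A))"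
proof -
  have "\<bar>op_app R A (enumerate R k)\<bar> \<le> (\<Sum>i<length A. \<bar>A ! i * int (enumerate R (k + i))\<bar>)"
    unfolding op_app_enumerate by (rule sum_abs)
  also have "\<dots> \<le> (\<Sum>i<length A. \<bar>A ! i\<bar> * int (enumerate R (k + length A)))"
    by (rule sum_mono) (auto simp: abs_mult R_infinite intro!: mult_left_mono)
  finally show ?thesis
    by (simp add: sum_distrib_right)
qed

lemma eventually_enumerate_if_finite_exceptions:
  assumes "finite {z \<in> R. \<not> P z}"
  obtains K where "\<And>k. K \<le> k \<Longrightarrow> P (enumerate R k)"
proof -
  obtain K where K: "\<And>z. z \<in> R \<Longrightarrow> \<not> P z \<Longrightarrow> z < K"
    using finite_nat_bounded[OF assms] by auto
  have "P (enumerate R k)" if "K \<le> k" for k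
    using K[of "enumerate R k"] that le_enumerate[OF R_infinite, of k] enumerate_in_set[OF R_infinite]
    by fastforce
  then show thesis
    using that by blast
qed

end

definition op_coeff :: "int list \<Rightarrow> nat \<Rightarrow> int" where
  "op_coeff A i = (if i < length A then A ! i else 0)"

lemma op_app_eq_sum_op_coeff:
  assumes "length A \<le> m"
  shows "op_app R A z = (\<Sum>i<m. op_coeff A i * int (sigpow R i z))"
proof -
  have "(\<Sum>i<m. op_coeff A i * int (sigpow R i z)) = (\<Sum>i<length A. op_coeff A i * int (sigpow R i z))"
    using assms by (intro sum.mono_neutral_right) (auto simp: op_coeff_def)
  then show ?thesis
    unfolding op_app_def by (simp add: op_coeff_def)
qed

lemma op_app_Cons_zero: "op_app R (0 # A) z = op_app R A (sig R z)"
  unfolding op_app_def sigpow_def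
  by (simp add: sum.lessThan_Suc_shift funpow_Suc_right del: sum.lessThan_Suc funpow.simps)

lemma op_app_map_times: "op_app R (map ((*) s) A) z = s * op_app R A z"
  by (simp add: op_app_def sum_distrib_left mult.assoc)

definition op_diff :: "int list \<Rightarrow> int list" where
  "op_diff A = map (\<lambda>i. op_coeff (0 # A) i - op_coeff A i) [0..<Suc (length A)]"

lemma op_app_op_diff: "op_app R (op_diff A) z = op_app R A (sig R z) - op_app R A z"
proof -
  have "op_app R (op_diff A) z =
      (\<Sum>i<Suc (length A). (op_coeff (0 # A) i - op_coeff A i) * int (sigpow R i z))"
    unfolding op_app_def op_diff_def by (intro sum.cong) (auto simp del: upt_Suc)
  also have "\<dots> = op_app R (0 # A) z - op_app R A z"
    by (simp add: left_diff_distrib sum_subtractf op_app_eq_sum_op_coeff[of _ "Suc (length A)"])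
  finally show ?thesis
    by (simp add: op_app_Cons_zero)
qed

definition op_steep :: "nat set \<Rightarrow> int list \<Rightarrow> int \<Rightarrow> nat \<Rightarrow> bool" where
  "op_steep R A s D \<longleftrightarrow> (\<forall>a b. D \<le> a \<longrightarrow> a < b \<longrightarrow>
     int (enumerate R (b - 1 - D)) < s * (op_app R A (enumerate R b) - op_app R A (enumerate R a)))"

lemma op_steep_mono:
  assumes "infinite R" and "op_steep R A s D" and "D \<le> D'"
  shows "op_steep R A s D'"
  unfolding op_steep_def
proof (intro allI impI)
  fix a b assume "D' \<le> a" and "a < b"
  then have "int (enumerate R (b - 1 - D)) <
      s * (op_app R A (enumerate R b) - op_app R A (enumerate R a))"
    using assms(2,3) unfolding op_steep_def by simp
  moreover have "enumerate R (b - 1 - D') \<le> enumerate R (b - 1 - D)"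
    using assms(1,3) by simp
  ultimately show "int (enumerate R (b - 1 - D')) <
      s * (op_app R A (enumerate R b) - op_app R A (enumerate R a))"
    by linarith
qed

context
  fixes R :: "nat set"
  assumes R_sparse: "sparse R"
begin

lemma sparse_infinite: "infinite R"
  using R_sparse by (simp add: sparse_def)

lemma sparse_op_pos_dominates:
  assumes "op_pos R A"
  obtains D where "\<And>k. int (enumerate R k) < op_app R A (enumerate R (k + D))"
proof -
  obtain D where "\<forall>z\<in>R. int z < op_app R A (sigpow R D z)"
    using R_sparse assms by (auto simp: sparse_def)
  then show thesis
    using that enumerate_in_set[OF sparse_infinite] sigpow_enumerate[OF sparse_infinite] by metis
qed

lemma sparse_enumerate_doubles:
  obtains D where "\<And>k. 2 * enumerate R k \<le> enumerate R (k + D)"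
proof -
  have gap: "op_app R [-1, 1] (enumerate R k) = int (enumerate R (Suc k)) - int (enumerate R k)" for k
    by (simp add: op_app_enumerate[OF sparse_infinite])
  have "op_pos R [-1, 1]"
    unfolding op_pos_def
  proof (rule finite_subset[of _ "{}"])
    show "{z \<in> R. \<not> 0 < op_app R [-1, 1] z} \<subseteq> {}"
      using enumerate_Ex[OF sparse_infinite] gap enumerate_step[OF sparse_infinite] by fastforce
  qed simp
  then obtain D where D: "\<And>k. int (enumerate R k) < op_app R [-1, 1] (enumerate R (k + D))"
    using sparse_op_pos_dominates by blast
  have "2 * enumerate R k \<le> enumerate R (k + Suc D)" for k
  proof -
    have "enumerate R k \<le> enumerate R (k + D)"
      using sparse_infinite by simp
    then show ?thesis
      using D[of k] gap[of "k + D"] by simp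
  qed
  then show thesis
    using that by blast
qed

lemma sparse_enumerate_growth:
  obtains T where "\<And>a. L * int (enumerate R a) \<le> int (enumerate R (a + T))"
proof -
  obtain D where D: "\<And>k. 2 * enumerate R k \<le> enumerate R (k + D)"
    using sparse_enumerate_doubles by blast
  have powers: "2 ^ t * enumerate R a \<le> enumerate R (a + t * D)" for a t
  proof (induction t)
    case (Suc t)
    have "2 ^ Suc t * enumerate R a \<le> 2 * enumerate R (a + t * D)"
      using Suc by simp
    also have "\<dots> \<le> enumerate R (a + Suc t * D)"
      using D[of "a + t * D"] by (simp add: ac_simps)
    finally show ?case .
  qed simp
  have "L * int (enumerate R a) \<le> int (enumerate R (a + nat L * D))" for a
  proof -
    have "L \<le> int (2 ^ nat L)"
      using less_exp[of "nat L"] by linarith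
    then have "L * int (enumerate R a) \<le> int (2 ^ nat L * enumerate R a)"
      by (simp add: mult_right_mono)
    also have "\<dots> \<le> int (enumerate R (a + nat L * D))"
      by (simp only: of_nat_le_iff powers)
    finally show ?thesis .
  qed
  then show thesis
    using that by blast
qed

text \<open>If \<open>A\<close> is eventually positive, so is \<open>A \<sigma> - A\<close>: otherwise \<open>A\<close> would be eventually
  non-increasing, contradicting (S2).\<close>

lemma sparse_op_pos_op_diff:
  assumes A_pos: "op_pos R A"
  shows "op_pos R (op_diff A)"
proof (rule ccontr)
  define g where "g k = op_app R A (enumerate R k)" for k
  have diff: "op_app R (op_diff A) (enumerate R k) = g (Suc k) - g k" for k
    by (simp add: op_app_op_diff g_def sparse_infinite)
  assume "\<not> op_pos R (op_diff A)"
  then have "op_zero R (op_diff A) \<or> op_neg R (op_diff A)"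
    using R_sparse by (auto simp: sparse_def)
  then obtain K where K: "\<And>k. K \<le> k \<Longrightarrow> g (Suc k) \<le> g k"
  proof
    assume "op_zero R (op_diff A)"
    then show thesis
      using that diff enumerate_in_set[OF sparse_infinite] by (fastforce simp: op_zero_def)
  next
    assume "op_neg R (op_diff A)"
    then obtain K where "\<And>k. K \<le> k \<Longrightarrow> op_app R (op_diff A) (enumerate R k) < 0"
      using eventually_enumerate_if_finite_exceptions[OF sparse_infinite,
          of "\<lambda>z. op_app R (op_diff A) z < 0"]
      unfolding op_neg_def by blast
    then show thesis
      using that diff by fastforce
  qed
  have bounded: "g (K + j) \<le> g K" for j
  proof (induction j)
    case (Suc j)
    then show ?case
      using K[of "K + j"] by simp
  qed simp
  obtain D where D: "\<And>k. int (enumerate R k) < g (k + D)"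
    using sparse_op_pos_dominates[OF A_pos] unfolding g_def by blast
  define k where "k = nat (g K) + K"
  have "int k \<le> int (enumerate R k)"
    using le_enumerate[OF sparse_infinite] by simp
  moreover have "g (k + D) \<le> g K"
    using bounded[of "nat (g K) + D"] by (simp add: k_def ac_simps)
  ultimately show False
    using D[of k] unfolding k_def by linarith
qed

lemma sparse_op_steep:
  assumes "\<not> op_zero R A"
  obtains s D where "s = 1 \<or> s = -1" and "op_steep R A s D"
proof -
  have "op_pos R A \<or> op_neg R A"
    using R_sparse assms by (auto simp: sparse_def)
  then obtain s where s: "s = 1 \<or> s = -1" and s_pos: "op_pos R (map ((*) s) A)"
  proof
    assume "op_pos R A"
    then show thesis
      using that[of 1] by (simp add: op_pos_def op_app_map_times)
  next
    assume "op_neg R A"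
    then show thesis
      using that[of "-1"] by (simp add: op_pos_def op_neg_def op_app_map_times)
  qed
  define F where "F k = s * op_app R A (enumerate R k)" for k
  obtain D where "\<And>k. int (enumerate R k) < op_app R (op_diff (map ((*) s) A)) (enumerate R (k + D))"
    using sparse_op_pos_dominates[OF sparse_op_pos_op_diff[OF s_pos]] by blast
  then have D: "int (enumerate R k) < F (Suc (k + D)) - F (k + D)" for k
    by (simp add: F_def op_app_op_diff op_app_map_times sparse_infinite right_diff_distrib)
  have "int (enumerate R (b - 1 - D)) < F b - F a" if "D \<le> a" "a < b" for a b
    using that(2)
  proof (induction b)
    case (Suc b)
    have step: "int (enumerate R (b - D)) < F (Suc b) - F b"
      using D[of "b - D"] \<open>D \<le> a\<close> Suc.prems by simp
    show ?case
    proof (cases "a = b")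
      case False
      then have "0 < F b - F a"
        using Suc by fastforce
      then show ?thesis
        using step by simp
    qed (use step in simp)
  qed simp
  then show thesis
    using that[OF s] unfolding op_steep_def F_def right_diff_distrib by blast
qed

end

locale steep_operators =
  fixes R :: "nat set" and As :: "int list list" and s :: "nat \<Rightarrow> int"
    and D M T :: nat and C :: int
  assumes R_infinite: "infinite R"
    and sign: "\<And>j. j < length As \<Longrightarrow> s j = 1 \<or> s j = -1"
    and steep: "\<And>j. j < length As \<Longrightarrow> op_steep R (As ! j) (s j) D"
    and bounded: "\<And>j k. j < length As \<Longrightarrow>
      \<bar>op_app R (As ! j) (enumerate R k)\<bar> \<le> C * int (enumerate R (k + M))"
    and growth: "\<And>a. 2 * int (length As) * C * int (enumerate R a) \<le> int (enumerate R (a + T))"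
    and C_nonneg: "0 \<le> C"

lemma steep_operators_if_sparse:
  assumes R_sparse: "sparse R" and nonzero: "\<forall>A\<in>set As. \<not> op_zero R A"
  obtains s D M T C where "steep_operators R As s D M T C"
proof -
  have R_infinite: "infinite R"
    using R_sparse by (rule sparse_infinite)
  have "\<exists>s D. (s = 1 \<or> s = -1) \<and> op_steep R (As ! j) s D" if "j < length As" for j
    using sparse_op_steep[OF R_sparse, of "As ! j"] nonzero that by (metis nth_mem)
  then obtain s Ds where sign: "\<And>j. j < length As \<Longrightarrow> s j = 1 \<or> s j = -1"
    and steep: "\<And>j. j < length As \<Longrightarrow> op_steep R (As ! j) (s j) (Ds j)"
    by metis
  define D where "D = (\<Sum>j<length As. Ds j)"
  define M where "M = (\<Sum>j<length As. length (As ! j))"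
  define C where "C = (\<Sum>j<length As. \<Sum>i<length (As ! j). \<bar>As ! j ! i\<bar>)"
  have C_nonneg: "0 \<le> C"
    unfolding C_def by (intro sum_nonneg) auto
  have "op_steep R (As ! j) (s j) D" if "j < length As" for j
    using op_steep_mono[OF R_infinite steep[OF that]] that
    unfolding D_def by (simp add: member_le_sum)
  moreover have "\<bar>op_app R (As ! j) (enumerate R k)\<bar> \<le> C * int (enumerate R (k + M))"
    if "j < length As" for j k
  proof -
    have "(\<Sum>i<length (As ! j). \<bar>As ! j ! i\<bar>) \<le> C"
      unfolding C_def using that by (intro member_le_sum[of j]) (auto intro: sum_nonneg)
    moreover have "length (As ! j) \<le> M"
      unfolding M_def using that by (intro member_le_sum) auto
    then have "enumerate R (k + length (As ! j)) \<le> enumerate R (k + M)"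
      using R_infinite by simp
    ultimately have "(\<Sum>i<length (As ! j). \<bar>As ! j ! i\<bar>) * int (enumerate R (k + length (As ! j)))
        \<le> C * int (enumerate R (k + M))"
      using C_nonneg by (intro mult_mono) (auto intro: sum_nonneg)
    then show ?thesis
      using abs_op_app_enumerate_le[OF R_infinite, of "As ! j" k] by linarith
  qed
  moreover obtain T
    where "\<And>a. 2 * int (length As) * C * int (enumerate R a) \<le> int (enumerate R (a + T))"
    using sparse_enumerate_growth[OF R_sparse] by blast
  ultimately have "steep_operators R As s D M T C"
    using R_infinite sign C_nonneg by unfold_locales blast+
  then show thesis
    by (rule that)
qed

lemma gapped_chain_le:
  fixes K :: "nat \<Rightarrow> nat"
  assumes gap: "\<And>j. Suc j < n \<Longrightarrow> K (Suc j) + \<Delta> \<le> K j"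
  shows "i \<le> j \<Longrightarrow> j < n \<Longrightarrow> K j + (j - i) * \<Delta> \<le> K i"
proof (induction j)
  case (Suc j)
  show ?case
  proof (cases "i = Suc j")
    case False
    then have "K j + (j - i) * \<Delta> \<le> K i" and "Suc j - i = Suc (j - i)"
      using Suc by auto
    then show ?thesis
      using gap[of j] Suc.prems by simp
  qed simp
qed simp

lemma int_bounded_above_has_max:
  fixes f :: "'a \<Rightarrow> int"
  assumes "z0 \<in> X" and "\<And>w. w \<in> X \<Longrightarrow> f w \<le> b"
  shows "\<exists>z\<in>X. \<forall>w\<in>X. f w \<le> f z"
proof -
  obtain z where z: "z \<in> X" and least: "\<And>w. w \<in> X \<Longrightarrow> nat (b - f z) \<le> nat (b - f w)"
    using ex_has_least_nat[of "\<lambda>z. z \<in> X" z0 "\<lambda>z. nat (b - f z)"] assms(1) by blast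
  have "f w \<le> f z" if "w \<in> X" for w
    using least[OF that] assms(2)[OF that] assms(2)[OF z] by linarith
  then show ?thesis
    using z by blast
qed

lemma int_bounded_below_has_min:
  fixes f :: "'a \<Rightarrow> int"
  assumes "z0 \<in> X" and "\<And>w. w \<in> X \<Longrightarrow> b \<le> f w"
  shows "\<exists>z\<in>X. \<forall>w\<in>X. f z \<le> f w"
  using int_bounded_above_has_max[of z0 X "\<lambda>z. - f z" "- b"] assms by auto

lemma less_infA_iff: "ereal (of_int x) > infA R As X \<longleftrightarrow> (\<exists>z\<in>X. dotA R As z < x)"
  unfolding infA_def by (simp add: INF_less_iff)

lemma le_supA_iff: "ereal (of_int x) \<le> supA R As X \<longleftrightarrow> (\<exists>z\<in>X. x \<le> dotA R As z)"
proof
  assume le_sup: "ereal (of_int x) \<le> supA R As X"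
  show "\<exists>z\<in>X. x \<le> dotA R As z"
  proof (rule ccontr)
    assume "\<not> (\<exists>z\<in>X. x \<le> dotA R As z)"
    then have "supA R As X \<le> ereal (of_int (x - 1))"
      unfolding supA_def by (intro SUP_least) auto
    then show False
      using le_sup by (auto dest: order_trans)
  qed
next
  assume "\<exists>z\<in>X. x \<le> dotA R As z"
  then show "ereal (of_int x) \<le> supA R As X"
    unfolding supA_def by (auto intro: SUP_upper2)
qed

lemma sum_split_at:
  fixes f :: "nat \<Rightarrow> int"
  assumes "i < n"
  shows "(\<Sum>j<n. f j) = (\<Sum>j<i. f j) + f i + (\<Sum>j = Suc i..<n. f j)"
  using assms sum.atLeastLessThan_concat[of 0 i n f] sum.atLeast_Suc_lessThan[of i n f]
  by (simp add: atLeast0LessThan)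

locale gapped_tuples = steep_operators +
  fixes Rt :: "nat set" and d N \<Delta> :: nat
  assumes Rt_eq: "Rt = {enumerate R (N + d * t) | t. True}"
    and d_pos: "0 < d"
    and As_nonempty: "As \<noteq> []"
    and \<Delta>_large: "M + T + 1 + D \<le> \<Delta>"
    and d_dvd_\<Delta>: "d dvd \<Delta>"
begin

abbreviation "tuples \<equiv> tupDelta R Rt (length As) \<Delta>"
abbreviation "dot \<equiv> dotA R As"
abbreviation "opval j k \<equiv> op_app R (As ! j) (enumerate R k)"

lemma Inf_Rt: "Inf Rt = enumerate R N"
proof (rule cInf_eq_minimum)
  show "enumerate R N \<in> Rt"
    unfolding Rt_eq by (auto intro: exI[of _ 0])
qed (auto simp: Rt_eq R_infinite)

lemma tuple_length: "z \<in> tuples \<Longrightarrow> length z = length As"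
  by (simp add: tupDelta_def)

lemma tuple_nth_in_Rt: "z \<in> tuples \<Longrightarrow> j < length As \<Longrightarrow> z ! j \<in> Rt"
  by (force simp: tupDelta_def)

lemma tuple_idx_in_Rt:
  assumes "z \<in> tuples" and "j < length As"
  obtains t where "idx R (z ! j) = N + d * t"
proof -
  obtain t where "z ! j = enumerate R (N + d * t)"
    using tuple_nth_in_Rt[OF assms] by (auto simp: Rt_eq)
  then have "idx R (z ! j) = N + d * t"
    using R_infinite by simp
  then show thesis
    by (rule that)
qed

lemma enumerate_idx_tuple:
  assumes "z \<in> tuples" and "j < length As"
  shows "enumerate R (idx R (z ! j)) = z ! j"
  using tuple_nth_in_Rt[OF assms] by (auto simp: Rt_eq R_infinite)

lemma tuple_gaps:
  assumes "z \<in> tuples" and "j < length As"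
  shows "sigpow R \<Delta> (if Suc j < length As then z ! Suc j else Inf Rt) \<le> z ! j"
  using assms by (simp add: tupDelta_def)

lemma tuple_idx_gap:
  assumes z: "z \<in> tuples" and j: "Suc j < length As"
  shows "idx R (z ! Suc j) + \<Delta> \<le> idx R (z ! j)"
proof -
  have "sigpow R \<Delta> (z ! Suc j) \<le> z ! j"
    using tuple_gaps[OF z, of j] j by simp
  then have "enumerate R (idx R (z ! Suc j) + \<Delta>) \<le> enumerate R (idx R (z ! j))"
    using enumerate_idx_tuple[OF z] j by (metis Suc_lessD sigpow_enumerate[OF R_infinite])
  then show ?thesis
    using R_infinite by simp
qed

lemma tuple_idx_chain:
  assumes "z \<in> tuples" and "i \<le> j" and "j < length As"
  shows "idx R (z ! j) + (j - i) * \<Delta> \<le> idx R (z ! i)"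
  using gapped_chain_le[of "length As" "\<lambda>j. idx R (z ! j)", OF tuple_idx_gap] assms by blast

lemma tuple_idx_last: "z \<in> tuples \<Longrightarrow> N + \<Delta> \<le> idx R (z ! (length As - 1))"
proof -
  assume z: "z \<in> tuples"
  have last: "length As - 1 < length As"
    using As_nonempty by simp
  have "sigpow R \<Delta> (Inf Rt) \<le> z ! (length As - 1)"
    using tuple_gaps[OF z last] As_nonempty by simp
  then have "enumerate R (N + \<Delta>) \<le> enumerate R (idx R (z ! (length As - 1)))"
    using enumerate_idx_tuple[OF z last] by (simp add: Inf_Rt R_infinite)
  then show ?thesis
    using R_infinite by simp
qed

lemma tuple_idx_lower:
  assumes z: "z \<in> tuples" and j: "j < length As"
  shows "N + (length As - j) * \<Delta> \<le> idx R (z ! j)"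
proof -
  have "idx R (z ! (length As - 1)) + (length As - 1 - j) * \<Delta> \<le> idx R (z ! j)"
    using tuple_idx_chain[OF z, of j "length As - 1"] j by simp
  moreover have "(length As - j) * \<Delta> = (length As - 1 - j) * \<Delta> + \<Delta>"
    using j by (metis Suc_diff_Suc add.commute diff_Suc_1 diff_commute mult_Suc)
  ultimately show ?thesis
    using tuple_idx_last[OF z] by linarith
qed

lemma tuple_idx_ge_\<Delta>: "z \<in> tuples \<Longrightarrow> j < length As \<Longrightarrow> \<Delta> \<le> idx R (z ! j)"
  using tuple_idx_lower[of z j] mult_le_mono1[of 1 "length As - j" \<Delta>] by linarith

lemma dot_tuple: "z \<in> tuples \<Longrightarrow> dot z = (\<Sum>j<length As. opval j (idx R (z ! j)))"
  unfolding dotA_def by (intro sum.cong) (auto simp: enumerate_idx_tuple)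

lemma abs_dot_tail_le:
  assumes z: "z \<in> tuples" and i: "i < length As"
  shows "\<bar>\<Sum>j = Suc i..<length As. opval j (idx R (z ! j))\<bar>
    \<le> int (length As) * C * int (enumerate R (idx R (z ! i) - \<Delta> + M))"
proof -
  let ?B = "C * int (enumerate R (idx R (z ! i) - \<Delta> + M))"
  have term_le: "\<bar>opval j (idx R (z ! j))\<bar> \<le> ?B" if "j \<in> {Suc i..<length As}" for j
  proof -
    have "idx R (z ! j) + (j - i) * \<Delta> \<le> idx R (z ! i)"
      using tuple_idx_chain[OF z, of i j] that by simp
    moreover have "\<Delta> \<le> (j - i) * \<Delta>"
      using that by (cases "j - i") auto
    ultimately have "idx R (z ! j) + M \<le> idx R (z ! i) - \<Delta> + M"
      by linarith
    then have "enumerate R (idx R (z ! j) + M) \<le> enumerate R (idx R (z ! i) - \<Delta> + M)"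
      using R_infinite by simp
    then have "C * int (enumerate R (idx R (z ! j) + M)) \<le> ?B"
      using C_nonneg by (simp add: mult_left_mono)
    then show ?thesis
      using bounded[of j "idx R (z ! j)"] that by simp
  qed
  have "\<bar>\<Sum>j = Suc i..<length As. opval j (idx R (z ! j))\<bar>
      \<le> (\<Sum>j = Suc i..<length As. \<bar>opval j (idx R (z ! j))\<bar>)"
    by (rule sum_abs)
  also have "\<dots> \<le> int (length As - Suc i) * ?B"
    using sum_bounded_above[of "{Suc i..<length As}" "\<lambda>j. \<bar>opval j (idx R (z ! j))\<bar>" ?B] term_le
    by simp
  also have "\<dots> \<le> int (length As) * ?B"
    using C_nonneg by (intro mult_right_mono) auto
  finally show ?thesis
    by (simp add: mult.assoc)
qed

text \<open>The increment in coordinate \<open>i\<close> exceeds \<open>r\<^bsub>a+T\<^esub> \<ge> 2 n C r\<^sub>a\<close>, while the later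
  coordinates of either tuple lie at least \<open>\<Delta>\<close> indices lower and contribute at most \<open>n C r\<^sub>a\<close>.\<close>

lemma dot_diff_sign:
  assumes z: "z \<in> tuples" and w: "w \<in> tuples" and i: "i < length As"
    and prefix: "\<And>j. j < i \<Longrightarrow> z ! j = w ! j" and less: "idx R (z ! i) < idx R (w ! i)"
  shows "0 < s i * (dot w - dot z)"
proof -
  define tail where "tail v = (\<Sum>j = Suc i..<length As. opval j (idx R (v ! j)))" for v
  define a where "a = idx R (w ! i) - \<Delta> + M"
  have split: "dot w - dot z = (opval i (idx R (w ! i)) - opval i (idx R (z ! i))) + (tail w - tail z)"
    using prefix unfolding dot_tuple[OF z] dot_tuple[OF w] sum_split_at[OF i] tail_def by simp
  have main: "2 * int (length As) * C * int (enumerate R a)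
      < s i * (opval i (idx R (w ! i)) - opval i (idx R (z ! i)))"
  proof -
    have "enumerate R (a + T) \<le> enumerate R (idx R (w ! i) - 1 - D)"
      using tuple_idx_ge_\<Delta>[OF w i] \<Delta>_large R_infinite by (simp add: a_def)
    moreover have "int (enumerate R (idx R (w ! i) - 1 - D))
        < s i * (opval i (idx R (w ! i)) - opval i (idx R (z ! i)))"
      using steep[OF i] tuple_idx_ge_\<Delta>[OF z i] \<Delta>_large less unfolding op_steep_def by simp
    ultimately show ?thesis
      using growth[of a] by linarith
  qed
  have tail_w: "\<bar>tail w\<bar> \<le> int (length As) * C * int (enumerate R a)"
    using abs_dot_tail_le[OF w i] by (simp add: tail_def a_def)
  have tail_z: "\<bar>tail z\<bar> \<le> int (length As) * C * int (enumerate R a)"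
  proof -
    have "enumerate R (idx R (z ! i) - \<Delta> + M) \<le> enumerate R a"
      using less R_infinite by (simp add: a_def)
    then have "int (length As) * C * int (enumerate R (idx R (z ! i) - \<Delta> + M))
        \<le> int (length As) * C * int (enumerate R a)"
      using C_nonneg by (intro mult_left_mono) simp_all
    then show ?thesis
      using abs_dot_tail_le[OF z i] unfolding tail_def by linarith
  qed
  have "\<bar>s i * (tail w - tail z)\<bar> \<le> \<bar>tail w\<bar> + \<bar>tail z\<bar>"
    using sign[OF i] abs_triangle_ineq4[of "tail w" "tail z"] by auto
  then have "\<bar>s i * (tail w - tail z)\<bar> < s i * (opval i (idx R (w ! i)) - opval i (idx R (z ! i)))"
    using main tail_w tail_z by linarith
  then show ?thesis
    unfolding split distrib_left by linarith
qed

lemma inj_on_dot: "inj_on dot tuples"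
proof
  fix z w assume z: "z \<in> tuples" and w: "w \<in> tuples" and eq: "dot z = dot w"
  show "z = w"
  proof (rule ccontr)
    assume "z \<noteq> w"
    then have ex: "\<exists>i. i < length As \<and> z ! i \<noteq> w ! i"
      using tuple_length[OF z] tuple_length[OF w] nth_equalityI by metis
    define i where "i = (LEAST i. i < length As \<and> z ! i \<noteq> w ! i)"
    have i: "i < length As" "z ! i \<noteq> w ! i"
      using LeastI_ex[OF ex] unfolding i_def by auto
    have prefix: "z ! j = w ! j" if "j < i" for j
      using not_less_Least[of j "\<lambda>i. i < length As \<and> z ! i \<noteq> w ! i"] that i(1)
      unfolding i_def by auto
    have "idx R (z ! i) \<noteq> idx R (w ! i)"
      using enumerate_idx_tuple[OF z i(1)] enumerate_idx_tuple[OF w i(1)] i(2) by metis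
    then show False
      using dot_diff_sign[OF z w i(1) prefix] dot_diff_sign[OF w z i(1) prefix[symmetric]] eq
      by (cases "idx R (z ! i) < idx R (w ! i)") auto
  qed
qed

lemma maxA_eqI:
  assumes "X \<subseteq> tuples" and "z \<in> X" and "\<And>w. w \<in> X \<Longrightarrow> dot w \<le> dot z"
  shows "maxA R As X = z"
  unfolding maxA_def
proof (rule the_equality)
  fix z' assume "z' \<in> X \<and> (\<forall>w\<in>X. dot w \<le> dot z')"
  then show "z' = z"
    using assms inj_on_dot by (metis inj_onD order_antisym subsetD)
qed (use assms in blast)

lemma minA_eqI:
  assumes "X \<subseteq> tuples" and "z \<in> X" and "\<And>w. w \<in> X \<Longrightarrow> dot z \<le> dot w"
  shows "minA R As X = z"
  unfolding minA_def
proof (rule the_equality)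
  fix z' assume "z' \<in> X \<and> (\<forall>w\<in>X. dot z' \<le> dot w)"
  then show "z' = z"
    using assms inj_on_dot by (metis inj_onD order_antisym subsetD)
qed (use assms in blast)

text \<open>The lowest tuple whose first coordinate is \<open>r\<^sub>c\<close>.\<close>

definition staircase :: "nat \<Rightarrow> nat list" where
  "staircase c = map (\<lambda>j. enumerate R (c - j * \<Delta>)) [0..<length As]"

lemma staircase_mem:
  assumes c: "c = N + d * t" and c_large: "N + length As * \<Delta> \<le> c"
  shows "staircase c \<in> tuples"
proof -
  obtain u where u: "\<Delta> = d * u"
    using d_dvd_\<Delta> by blast
  have j_le: "j * \<Delta> \<le> length As * \<Delta>" if "j \<le> length As" for j
    using that by (simp add: mult_le_mono1)
  have in_Rt: "enumerate R (c - j * \<Delta>) \<in> Rt" if "j < length As" for j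
  proof -
    have "j * \<Delta> \<le> d * t"
      using j_le[of j] that c c_large by linarith
    then have "c - j * \<Delta> = N + d * (t - j * u)"
      using c u by (simp add: diff_mult_distrib2 ac_simps)
    then show ?thesis
      unfolding Rt_eq by auto
  qed
  have gaps: "sigpow R \<Delta> (if Suc i < length As then staircase c ! Suc i else Inf Rt)
      \<le> enumerate R (c - i * \<Delta>)" if i: "i < length As" for i
  proof (cases "Suc i < length As")
    case True
    have "Suc i * \<Delta> \<le> c"
      using j_le[of "Suc i"] True c_large by simp
    then have "c - Suc i * \<Delta> + \<Delta> = c - i * \<Delta>"
      by simp
    then show ?thesis
      using True by (simp add: staircase_def R_infinite del: upt_Suc)
  next
    case False
    then have "length As = Suc i"
      using i by simp
    then have "length As * \<Delta> = i * \<Delta> + \<Delta>"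
      by simp
    then have "N + \<Delta> \<le> c - i * \<Delta>"
      using c_large by simp
    then show ?thesis
      using False by (simp add: Inf_Rt R_infinite)
  qed
  have "length (staircase c) = length As"
    and "\<And>i. i < length As \<Longrightarrow> staircase c ! i = enumerate R (c - i * \<Delta>)"
    by (simp_all add: staircase_def)
  then show ?thesis
    unfolding tupDelta_def using in_Rt gaps by (auto simp: set_conv_nth)
qed

lemma idx_staircase_0: "idx R (staircase c ! 0) = c"
  using As_nonempty R_infinite by (simp add: staircase_def)

lemma staircase_base_mem: "staircase (N + length As * \<Delta>) \<in> tuples"
proof -
  obtain u where "\<Delta> = d * u"
    using d_dvd_\<Delta> by blast
  then show ?thesis
    by (intro staircase_mem[of _ "length As * u"]) simp_all
qed

lemma tuple_value_between:
  assumes u: "u \<in> tuples" and v: "v \<in> tuples"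
    and u0: "idx R (u ! 0) = N + d * t1" and v0: "idx R (v ! 0) = N + d * t2" and gap: "t1 + 2 \<le> t2"
  obtains w where "w \<in> tuples" and "dot u < dot w \<and> dot w < dot v \<or> dot v < dot w \<and> dot w < dot u"
proof -
  have nonempty: "0 < length As"
    using As_nonempty by simp
  define c where "c = N + d * (t1 + 1)"
  have "d * t1 < d * (t1 + 1)"
    using d_pos by simp
  moreover have "d * (t1 + 1) < d * t2"
    using d_pos gap by (intro mult_strict_left_mono) auto
  ultimately have u_c: "idx R (u ! 0) < c" and c_v: "c < idx R (v ! 0)"
    using u0 v0 by (simp_all add: c_def)
  have w: "staircase c \<in> tuples"
    using staircase_mem[OF c_def] tuple_idx_lower[OF u nonempty] u_c by simp
  have "0 < s 0 * (dot (staircase c) - dot u)" and "0 < s 0 * (dot v - dot (staircase c))"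
    using dot_diff_sign[OF u w nonempty] dot_diff_sign[OF w v nonempty] u_c c_v
    by (simp_all add: idx_staircase_0)
  then show thesis
    using that[OF w] sign[OF nonempty] by auto
qed

lemma first_coordinate_adjacent:
  assumes p: "p \<in> tuples" and q: "q \<in> tuples"
    and gapless: "\<And>w. w \<in> tuples \<Longrightarrow>
      \<not> (dot p < dot w \<and> dot w < dot q) \<and> \<not> (dot q < dot w \<and> dot w < dot p)"
  shows "\<exists>\<epsilon>::int. \<epsilon> \<in> {-1, 0, 1} \<and> q ! 0 = sigpowi R (int d * \<epsilon>) (p ! 0)"
proof -
  have nonempty: "0 < length As"
    using As_nonempty by simp
  obtain tp where tp: "idx R (p ! 0) = N + d * tp"
    using tuple_idx_in_Rt[OF p nonempty] by blast
  obtain tq where tq: "idx R (q ! 0) = N + d * tq"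
    using tuple_idx_in_Rt[OF q nonempty] by blast
  have "\<not> tp + 2 \<le> tq" and "\<not> tq + 2 \<le> tp"
    using tuple_value_between[OF p q tp tq] tuple_value_between[OF q p tq tp] gapless by metis+
  then consider "tq = tp + 1" | "tq = tp" | "tp = tq + 1"
    by linarith
  moreover have "p ! 0 = enumerate R (N + d * tp)" and "q ! 0 = enumerate R (N + d * tq)"
    using enumerate_idx_tuple[OF p nonempty] enumerate_idx_tuple[OF q nonempty] tp tq by simp_all
  ultimately show ?thesis
  proof cases
    case 1
    then show ?thesis
      using \<open>p ! 0 = _\<close> \<open>q ! 0 = _\<close>
      by (intro exI[of _ 1]) (simp add: sigpowi_of_nat_enumerate R_infinite algebra_simps)
  next
    case 2
    then show ?thesis
      using \<open>p ! 0 = _\<close> \<open>q ! 0 = _\<close> by (intro exI[of _ 0]) (simp add: sigpowi_def)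
  next
    case 3
    then show ?thesis
      using \<open>p ! 0 = _\<close> \<open>q ! 0 = _\<close>
      by (intro exI[of _ "-1"]) (simp add: sigpowi_uminus_enumerate R_infinite algebra_simps)
  qed
qed

abbreviation "P x \<equiv> Pfun R Rt \<Delta> As x"
abbreviation "Q x \<equiv> Qfun R Rt \<Delta> As x"

lemma Pfun_above_inf:
  assumes "infA R As tuples < ereal (of_int x)"
  shows "P x \<in> tuples \<and> dot (P x) < x \<and> (\<forall>w\<in>tuples. dot w < x \<longrightarrow> dot w \<le> dot (P x))"
proof -
  obtain z0 where "z0 \<in> {z \<in> tuples. dot z < x}"
    using assms less_infA_iff by blast
  then have "\<exists>z\<in>{z \<in> tuples. dot z < x}. \<forall>w\<in>{z \<in> tuples. dot z < x}. dot w \<le> dot z"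
    by (rule int_bounded_above_has_max[where b = x]) simp
  then obtain z where z: "z \<in> {z \<in> tuples. dot z < x}"
    and max: "\<forall>w\<in>{z \<in> tuples. dot z < x}. dot w \<le> dot z"
    by blast
  have "P x = z"
    using assms maxA_eqI[of "{z \<in> tuples. dot z < x}" z] z max by (simp add: Pfun_def)
  then show ?thesis
    using z max by auto
qed

lemma Pfun_not_above_inf:
  assumes "\<not> infA R As tuples < ereal (of_int x)"
  shows "P x \<in> tuples \<and> (\<forall>w\<in>tuples. x \<le> dot w \<and> dot (P x) \<le> dot w)"
proof -
  have above: "\<forall>w\<in>tuples. x \<le> dot w"
    using assms less_infA_iff by (auto simp: not_less)
  then obtain z where z: "z \<in> tuples" and min: "\<forall>w\<in>tuples. dot z \<le> dot w"
    using int_bounded_below_has_min[OF staircase_base_mem, of x dot] by blast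
  have "P x = z"
    using assms minA_eqI[of tuples z] z min by (simp add: Pfun_def)
  then show ?thesis
    using z min above by auto
qed

lemma Qfun_below_sup:
  assumes "ereal (of_int x) \<le> supA R As tuples"
  shows "Q x \<in> tuples \<and> x \<le> dot (Q x) \<and> (\<forall>w\<in>tuples. x \<le> dot w \<longrightarrow> dot (Q x) \<le> dot w)"
proof -
  obtain z0 where "z0 \<in> {z \<in> tuples. x \<le> dot z}"
    using assms le_supA_iff by blast
  then have "\<exists>z\<in>{z \<in> tuples. x \<le> dot z}. \<forall>w\<in>{z \<in> tuples. x \<le> dot z}. dot z \<le> dot w"
    by (rule int_bounded_below_has_min[where b = x]) simp
  then obtain z where z: "z \<in> {z \<in> tuples. x \<le> dot z}"
    and min: "\<forall>w\<in>{z \<in> tuples. x \<le> dot z}. dot z \<le> dot w"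
    by blast
  have "Q x = z"
    using assms minA_eqI[of "{z \<in> tuples. x \<le> dot z}" z] z min by (simp add: Qfun_def)
  then show ?thesis
    using z min by auto
qed

lemma Qfun_not_below_sup:
  assumes "\<not> ereal (of_int x) \<le> supA R As tuples"
  shows "Q x \<in> tuples \<and> (\<forall>w\<in>tuples. dot w < x \<and> dot w \<le> dot (Q x))"
proof -
  have below: "\<forall>w\<in>tuples. dot w < x"
    using assms le_supA_iff by (auto simp: not_le)
  then obtain z where z: "z \<in> tuples" and max: "\<forall>w\<in>tuples. dot w \<le> dot z"
    using int_bounded_above_has_max[OF staircase_base_mem, of dot x] by force
  have "Q x = z"
    using assms maxA_eqI[of tuples z] z max by (simp add: Qfun_def)
  then show ?thesis
    using z max below by auto
qed

lemma Pfun_Qfun_threshold: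
  "(dot (P x) < x \<longleftrightarrow> infA R As tuples < ereal (of_int x)) \<and>
   (x \<le> dot (Q x) \<longleftrightarrow> ereal (of_int x) \<le> supA R As tuples)"
proof (intro conjI)
  show "dot (P x) < x \<longleftrightarrow> infA R As tuples < ereal (of_int x)"
  proof (cases "infA R As tuples < ereal (of_int x)")
    case False
    then have "x \<le> dot (P x)"
      using Pfun_not_above_inf by blast
    then show ?thesis
      using False by simp
  qed (use Pfun_above_inf in blast)
  show "x \<le> dot (Q x) \<longleftrightarrow> ereal (of_int x) \<le> supA R As tuples"
  proof (cases "ereal (of_int x) \<le> supA R As tuples")
    case False
    then have "dot (Q x) < x"
      using Qfun_not_below_sup by blast
    then show ?thesis
      using False by simp
  qed (use Qfun_below_sup in blast)
qed

lemma Pfun_eq_Qfun_outside: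
  assumes "\<not> (infA R As tuples < ereal (of_int x) \<and> ereal (of_int x) \<le> supA R As tuples)"
  shows "P x = Q x"
proof -
  have "P x \<in> tuples \<and> Q x \<in> tuples \<and> dot (P x) = dot (Q x)"
  proof (cases "infA R As tuples < ereal (of_int x)")
    case True
    then have "\<not> ereal (of_int x) \<le> supA R As tuples"
      using assms by blast
    then show ?thesis
      using Pfun_above_inf[OF True] Qfun_not_below_sup by (meson order_antisym)
  next
    case False
    then have "ereal (of_int x) \<le> supA R As tuples"
      using Pfun_not_above_inf le_supA_iff by blast
    then show ?thesis
      using Pfun_not_above_inf[OF False] Qfun_below_sup by (meson order_antisym)
  qed
  then show ?thesis
    using inj_on_dot by (blast dest: inj_onD)
qed

lemma Qfun_Pfun_first_coordinate:
  "\<exists>\<epsilon>::int. \<epsilon> \<in> {-1, 0, 1} \<and> Q x ! 0 = sigpowi R (int d * \<epsilon>) (P x ! 0)"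
proof (cases "infA R As tuples < ereal (of_int x) \<and> ereal (of_int x) \<le> supA R As tuples")
  case True
  then have P: "P x \<in> tuples" "dot (P x) < x" "\<And>w. w \<in> tuples \<Longrightarrow> dot w < x \<Longrightarrow> dot w \<le> dot (P x)"
    and Q: "Q x \<in> tuples" "x \<le> dot (Q x)" "\<And>w. w \<in> tuples \<Longrightarrow> x \<le> dot w \<Longrightarrow> dot (Q x) \<le> dot w"
    using Pfun_above_inf Qfun_below_sup by blast+
  show ?thesis
  proof (rule first_coordinate_adjacent[OF P(1) Q(1)])
    fix w assume w: "w \<in> tuples"
    show "\<not> (dot (P x) < dot w \<and> dot w < dot (Q x)) \<and> \<not> (dot (Q x) < dot w \<and> dot w < dot (P x))"
    proof (cases "dot w < x")
      case True
      then show ?thesis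
        using P(2) P(3)[OF w True] Q(2) by linarith
    next
      case False
      then show ?thesis
        using P(2) Q(2) Q(3)[OF w] by linarith
    qed
  qed
next
  case False
  then show ?thesis
    using Pfun_eq_Qfun_outside by (intro exI[of _ 0]) (simp add: sigpowi_def)
qed

end

theorem mainTheorem7:
  fixes R Rt :: "nat set" and d n :: nat and As :: "int list list"
  assumes "sparse R" and "d \<ge> 1" and "subd d R Rt" and "n \<ge> 1"
    and "length As = n" and "\<forall>A\<in>set As. \<not> op_zero R A"
  shows "\<exists>\<Delta>0. \<forall>\<Delta>. d dvd \<Delta> \<and> \<Delta> \<ge> \<Delta>0 \<longrightarrow>
     (\<forall>x::int.
        (x > dotA R As (Pfun R Rt \<Delta> As x) \<longleftrightarrow>
           ereal (of_int x) > infA R As (tupDelta R Rt n \<Delta>)) \<and>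
        (x \<le> dotA R As (Qfun R Rt \<Delta> As x) \<longleftrightarrow>
           ereal (of_int x) \<le> supA R As (tupDelta R Rt n \<Delta>))) \<and>
     (\<forall>x::int. \<exists>\<epsilon>::int. \<epsilon> \<in> {-1, 0, 1} \<and>
        Qfun R Rt \<Delta> As x ! 0 = sigpowi R (int d * \<epsilon>) (Pfun R Rt \<Delta> As x ! 0))"
proof -
  obtain s D M T C where steep: "steep_operators R As s D M T C"
    using steep_operators_if_sparse[OF assms(1,6)] .
  obtain N where Rt: "Rt = {enumerate R (N + d * t) | t. True}"
    using assms(3) by (auto simp: subd_def)
  show ?thesis
  proof (intro exI[of _ "M + T + 1 + D"] allI impI)
    fix \<Delta> assume "d dvd \<Delta> \<and> M + T + 1 + D \<le> \<Delta>"
    then interpret gapped_tuples R As s D M T C Rt d N \<Delta>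
      unfolding gapped_tuples_def gapped_tuples_axioms_def using steep Rt assms(2,4,5) by auto
    show "(\<forall>x::int.
        (x > dotA R As (Pfun R Rt \<Delta> As x) \<longleftrightarrow> ereal (of_int x) > infA R As (tupDelta R Rt n \<Delta>)) \<and>
        (x \<le> dotA R As (Qfun R Rt \<Delta> As x) \<longleftrightarrow> ereal (of_int x) \<le> supA R As (tupDelta R Rt n \<Delta>))) \<and>
      (\<forall>x::int. \<exists>\<epsilon>::int. \<epsilon> \<in> {-1, 0, 1} \<and>
        Qfun R Rt \<Delta> As x ! 0 = sigpowi R (int d * \<epsilon>) (Pfun R Rt \<Delta> As x ! 0))"
      using Pfun_Qfun_threshold Qfun_Pfun_first_coordinate unfolding assms(5) by blast
  qed
qed

end
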